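(* Fix $L<M$ and $\zeta_0\in\mathbb R$. There are $c>0$ and $C\in\mathbb R$ such that for all $n$ large enough $$|P^{(n)}(t,y,\zeta)|\le Ce^{-c(y+\zeta)}$$ for all $y\ge0$, $\zeta\ge\zeta_0$, uniformly in $t\in[L,M]$.
   Context: $p_r^{(n)}(x)=\frac{-1}{2\pi i}\oint_{\Gamma_1}\frac{dz}{z}\frac{1}{z^x(1-z)^{n-r}(1+1/z)^r}$, $\Gamma_1$ a small counterclockwise circle around $1$. Scaling (integer parts neglected): $l=n(\frac12+\frac1{2\sqrt2})+2^{-7/6}tn^{2/3}$, $j=2^{-5/6}yn^{1/3}$, $v=n/\sqrt2+2^{-5/6}\zeta n^{1/3}$ (so $t\in[L,M]$ corresponds to $l\in[b_n(L)/2,b_n(M)/2]$ with $b_n(\tau)=n(1+1/\sqrt2)+2^{-1/6}\tau n^{2/3}$). $P^{(n)}(t,y,\zeta)=2^{-5/6}n^{1/3}2^{n/2}(\sqrt2+1)^{-j-2^{-5/6}\zeta n^{1/3}+2^{-1/6}tn^{2/3}}p_l^{(n)}(v+j)$. *)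

theory Defs
  imports "HOL-Complex_Analysis.Complex_Analysis"
begin

text \<open>The kernel p_r^(n)(x), defined by the contour integral over a small
counterclockwise circle around 1 (radius 1/2, which encloses neither 0 nor -1).
Integer exponents are rendered with powi.\<close>
definition pker :: "nat \<Rightarrow> int \<Rightarrow> int \<Rightarrow> complex" where
  "pker n r x = - (1 / (2 * of_real pi * \<i>)) *
     contour_integral (circlepath 1 (1/2::real))
       (\<lambda>z. (1 / z) * (1 / (z powi x * (1 - z) powi (int n - r) * (1 + 1 / z) powi r)))"

definition lsc :: "nat \<Rightarrow> real \<Rightarrow> int" where
  "lsc n t = \<lfloor>real n * (1/2 + 1 / (2 * sqrt 2)) + 2 powr (-7/6) * t * real n powr (2/3)\<rfloor>"

definition jsc :: "nat \<Rightarrow> real \<Rightarrow> int" where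
  "jsc n y = \<lfloor>2 powr (-5/6) * y * real n powr (1/3)\<rfloor>"

definition vsc :: "nat \<Rightarrow> real \<Rightarrow> int" where
  "vsc n \<zeta> = \<lfloor>real n / sqrt 2 + 2 powr (-5/6) * \<zeta> * real n powr (1/3)\<rfloor>"

definition Psc :: "nat \<Rightarrow> real \<Rightarrow> real \<Rightarrow> real \<Rightarrow> complex" where
  "Psc n t y \<zeta> =
     of_real (2 powr (-5/6) * real n powr (1/3) * 2 powr (real n / 2) *
       (sqrt 2 + 1) powr (- real_of_int (jsc n y) - 2 powr (-5/6) * \<zeta> * real n powr (1/3)
                          + 2 powr (-1/6) * t * real n powr (2/3)))
     * pker n (lsc n t) (vsc n \<zeta> + jsc n y)"

end

(* Deform the contour to the circle of radius \<rho> = 2 - \<surd>2 - s about 1, which crosses the real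
   axis at \<surd>2 - 1 + s, just to the right of the critical point \<surd>2 - 1 of the phase; take
   s = \<sigma> n^(-1/3). On such a circle the modulus of the integrand is largest at \<surd>2 - 1 + s and
   decays in the angle at least like a Lorentzian of width n^(-1/3), so the kernel is bounded by
   n^(-1/3) times that maximal modulus. Expanding the logarithm of the modulus around \<surd>2 - 1 by the
   mean value theorem, its value at \<surd>2 - 1 cancels the prefactor of P up to a bounded factor, the
   remainder is O(\<sigma>^3), and the linear term gives exp(-2 s (x - n/\<surd>2)), which in the scaling
   variables is exp(-2^(1/6) \<sigma> (y + \<zeta>)). *)

theory Submission
  imports Defs
begin

lemma cos_ge_one_minus_sq_div2: "1 - x^2 / 2 \<le> cos (x :: real)"
proof -
  have "1 - \<bar>x\<bar>^2 / 2 \<le> cos \<bar>x\<bar>"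
  proof -
    let ?f = "\<lambda>x::real. cos x - 1 + x^2 / 2"
    have "?f 0 \<le> ?f \<bar>x\<bar>"
    proof (rule DERIV_nonneg_imp_nondecreasing[of 0 "\<bar>x\<bar>" ?f])
      fix y :: real assume "0 \<le> y"
      then show "\<exists>d. DERIV ?f y :> d \<and> d \<ge> 0"
        using sin_x_le_x[of y] by (auto intro!: derivative_eq_intros)
    qed simp
    then show ?thesis by simp
  qed
  then show ?thesis by simp
qed

lemma sin_ge_cubic:
  assumes "0 \<le> x"
  shows "x - x^3 / 6 \<le> sin (x :: real)"
proof -
  let ?f = "\<lambda>x::real. sin x - x + x^3 / 6"
  have "?f 0 \<le> ?f x"
  proof (rule DERIV_nonneg_imp_nondecreasing[of 0 x ?f])
    fix y :: real
    show "\<exists>d. DERIV ?f y :> d \<and> d \<ge> 0"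
      using cos_ge_one_minus_sq_div2[of y] by (auto intro!: derivative_eq_intros)
  qed (use assms in simp)
  then show ?thesis by simp
qed

lemma one_plus_cos_ge:
  assumes "0 \<le> t" "t \<le> 1"
  shows "2 * (t - 1/2)^2 \<le> 1 + cos (2 * pi * t)"
proof -
  define v where "v = \<bar>pi * (t - 1/2)\<bar>"
  have "cos (2 * pi * t) = - cos (2 * (pi * (t - 1/2)))"
    by (simp add: algebra_simps)
  then have "1 + cos (2 * pi * t) = 2 * sin v ^ 2"
    unfolding v_def by (simp add: cos_double_sin abs_if)
  have "\<bar>t - 1/2\<bar> \<le> 1/2"
    unfolding abs_le_iff using assms by simp
  then have "v \<le> pi / 2"
    using mult_left_mono[of "\<bar>t - 1/2\<bar>" "1/2" pi] by (simp add: v_def abs_mult)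
  then have v: "0 \<le> v" "v \<le> 2"
    using pi_less_4 by (auto simp: v_def)
  then have "v^3 \<le> 4 * v"
    using mult_left_mono[OF power_mono[OF v(2) v(1), of 2] v(1)]
    by (simp add: power3_eq_cube power2_eq_square mult.commute)
  then have "v / 3 \<le> sin v"
    using sin_ge_cubic[OF v(1)] by simp
  then have "(v / 3)^2 \<le> sin v ^ 2"
    using v by (intro power_mono) auto
  moreover have "9 * (t - 1/2)^2 \<le> v^2"
    using pi_gt3 power_mono[of 3 pi 2] by (simp add: v_def power_mult_distrib mult_right_mono)
  ultimately show ?thesis
    using \<open>1 + cos (2 * pi * t) = 2 * sin v ^ 2\<close> by (simp add: power_divide)
qed

lemma exp_neg_one_plus_cos_le:
  assumes "B \<ge> 0" "0 \<le> t" "t \<le> 1"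
  shows "exp (- B * (1 + cos (2 * pi * t))) \<le> 1 / (1 + 2 * B * (t - 1/2)^2)"
proof -
  have "1 + 2 * B * (t - 1/2)^2 \<le> 1 + B * (1 + cos (2 * pi * t))"
    using mult_left_mono[OF one_plus_cos_ge[OF assms(2,3)] assms(1)] by simp
  also have "\<dots> \<le> exp (B * (1 + cos (2 * pi * t)))"
    by (rule exp_ge_add_one_self)
  finally show ?thesis
    using assms(1) by (simp add: exp_minus divide_simps add_pos_nonneg)
qed

lemma norm_of_real_add_cis_sq:
  "norm (complex_of_real a + of_real \<rho> * cis \<theta>)^2 = a^2 + \<rho>^2 + 2 * a * \<rho> * cos \<theta>"
proof -
  have "norm (complex_of_real a + of_real \<rho> * cis \<theta>)^2 = (a + \<rho> * cos \<theta>)^2 + (\<rho> * sin \<theta>)^2"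
    by (simp add: cmod_power2)
  also have "\<dots> = a^2 + \<rho>^2 * (sin \<theta>^2 + cos \<theta>^2) + 2 * a * \<rho> * cos \<theta>"
    by algebra
  finally show ?thesis by simp
qed

lemma circlepath_eq_cis: "circlepath z \<rho> t = z + of_real \<rho> * cis (2 * pi * t)"
  by (simp add: circlepath cis_conv_exp mult_ac)

lemma has_integral_inverse_one_plus_sq:
  assumes "B > 0"
  shows "((\<lambda>t. 1 / (1 + B * (t - 1/2)^2)) has_integral 2 * arctan (sqrt B / 2) / sqrt B) {0..1}"
proof -
  define k where "k = sqrt B"
  have k: "k > 0" "k^2 = B"
    using assms by (simp_all add: k_def)
  have "((\<lambda>t. 1 / (1 + B * (t - 1/2)^2)) has_integral
          arctan (k * (1 - 1/2)) / k - arctan (k * (0 - 1/2)) / k) {0..1}"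
  proof (rule fundamental_theorem_of_calculus)
    fix t :: real
    have "((\<lambda>t. arctan (k * (t - 1/2)) / k) has_real_derivative 1 / (1 + (k * (t - 1/2))^2)) (at t)"
      using k by (auto intro!: derivative_eq_intros simp: divide_simps)
    then have "((\<lambda>t. arctan (k * (t - 1/2)) / k) has_real_derivative 1 / (1 + B * (t - 1/2)^2)) (at t)"
      using k by (simp add: power_mult_distrib)
    then show "((\<lambda>t. arctan (k * (t - 1/2)) / k) has_vector_derivative 1 / (1 + B * (t - 1/2)^2))
                 (at t within {0..1})"
      by (simp add: has_real_derivative_iff_has_vector_derivative has_vector_derivative_at_within)
  qed simp
  then show ?thesis
    by (simp add: k_def arctan_minus field_simps)
qed

lemma norm_contour_integral_circlepath_le:
  assumes "f contour_integrable_on circlepath z \<rho>" "\<rho> > 0"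
    and "\<And>t. t \<in> {0..1} \<Longrightarrow> norm (f (circlepath z \<rho> t)) \<le> g t"
    and "(g has_integral I) {0..1}"
  shows "norm (contour_integral (circlepath z \<rho>) f) \<le> 2 * pi * \<rho> * I"
proof -
  let ?h = "\<lambda>t. f (circlepath z \<rho> t) * vector_derivative (circlepath z \<rho>) (at t within {0..1})"
  have h: "(?h has_integral contour_integral (circlepath z \<rho>) f) {0..1}"
    using has_contour_integral_integral[OF assms(1)] unfolding has_contour_integral_def .
  have g: "((\<lambda>t. 2 * pi * \<rho> * g t) has_integral 2 * pi * \<rho> * I) {0..1}"
    using has_integral_mult_right[OF assms(4)] by simp
  have "norm (?h t) \<le> 2 * pi * \<rho> * g t" if "t \<in> {0..1}" for t
    using that assms(2) assms(3)[OF that]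
    by (simp add: vector_derivative_circlepath01 norm_mult mult.commute mult_left_mono)
  then have "norm (integral {0..1} ?h) \<le> integral {0..1} (\<lambda>t. 2 * pi * \<rho> * g t)"
    using h g by (intro integral_norm_bound_integral) blast+
  with h integral_unique[OF assms(4)] show ?thesis
    by (simp add: integral_unique)
qed

lemma sqrt2_bounds: "1.414 \<le> sqrt (2::real)" "sqrt (2::real) \<le> 1.4143"
proof -
  show "1.414 \<le> sqrt (2::real)"
    by (rule real_le_rsqrt) (simp add: power2_eq_square)
  have "sqrt (2::real) \<le> sqrt (1.4143^2)"
    by (subst real_sqrt_le_iff) (simp add: power2_eq_square)
  then show "sqrt (2::real) \<le> 1.4143"
    by simp
qed

lemma le_powr_one_third_if_cube_le:
  fixes a x :: real
  assumes "0 \<le> a" "a^3 \<le> x"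
  shows "a \<le> x powr (1/3)"
proof -
  have "a^3 = a powr 3"
    using assms(1) by simp
  then have "(a^3) powr (1/3) = a"
    using assms(1) by (simp only: powr_powr) simp
  moreover have "(a^3) powr (1/3) \<le> x powr (1/3)"
    using assms by (intro powr_mono2) auto
  ultimately show ?thesis
    by simp
qed

section \<open>The kernel on circles around 1\<close>

definition pker_integrand :: "int \<Rightarrow> int \<Rightarrow> int \<Rightarrow> complex \<Rightarrow> complex" where
  "pker_integrand m r x z = (1 / z) * (1 / (z powi x * (1 - z) powi m * (1 + 1 / z) powi r))"

lemma norm_pker_integrand:
  assumes "z \<noteq> 0" "z \<noteq> 1" "z \<noteq> -1"
  shows "norm (pker_integrand m r x z) =
           norm z powr (r - x - 1) * norm (1 + z) powr (- r) * norm (1 - z) powr (- m)"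
proof -
  have pos: "norm z > 0" "norm (1 + z) > 0" "norm (1 - z) > 0"
    using assms by (auto simp: add_eq_0_iff)
  have "1 + 1 / z = (1 + z) / z"
    using assms by (simp add: field_simps)
  then have "norm (pker_integrand m r x z) =
      (1 / norm z) * (1 / (norm z powr x * norm (1 - z) powr m * (norm (1 + z) / norm z) powr r))"
    using pos by (simp add: pker_integrand_def norm_mult norm_divide norm_power_int powr_real_of_int')
  also have "\<dots> = norm z powr (r - x - 1) * norm (1 + z) powr (- r) * norm (1 - z) powr (- m)"
    using pos by (simp add: powr_divide powr_diff powr_minus powr_add divide_simps)
  finally show ?thesis .
qed

lemma pker_integrand_holomorphic:
  assumes "R \<le> 1"
  shows "pker_integrand m r x holomorphic_on ball 1 R - {1}"
proof -
  have "w \<noteq> 0" "1 - w \<noteq> 0" "1 + 1 / w \<noteq> 0" if "w \<in> ball 1 R - {1}" for w :: complex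
  proof -
    have dist: "norm (1 - w) < 1"
      using that assms by (simp add: dist_norm)
    then show "w \<noteq> 0" "1 - w \<noteq> 0"
      using that by auto
    have "w \<noteq> -1"
      using dist by auto
    with \<open>w \<noteq> 0\<close> show "1 + 1 / w \<noteq> 0"
      by (simp add: field_simps add_eq_0_iff)
  qed
  then show ?thesis
    unfolding pker_integrand_def by (intro holomorphic_intros) auto
qed

lemma pker_circlepath:
  assumes "1/2 \<le> \<rho>" "\<rho> < 1"
  shows "pker_integrand (int n - r) r x contour_integrable_on circlepath 1 \<rho>"
    and "pker n r x = - (1 / (2 * of_real pi * \<i>)) *
                        contour_integral (circlepath 1 \<rho>) (pker_integrand (int n - r) r x)"
proof -
  have "cball 1 \<rho> \<subseteq> ball 1 ((1 + \<rho>) / 2)" "(1 + \<rho>) / 2 \<le> 1"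
    using assms by auto
  note deform = contour_integral_circlepath_eq[OF open_ball
      pker_integrand_holomorphic[OF \<open>(1 + \<rho>) / 2 \<le> 1\<close>] _ assms(1) this(1)]
  then show "pker_integrand (int n - r) r x contour_integrable_on circlepath 1 \<rho>"
    by simp
  have "(\<lambda>z. (1 / z) * (1 / (z powi x * (1 - z) powi (int n - r) * (1 + 1 / z) powi r))) =
        pker_integrand (int n - r) r x"
    by (simp add: pker_integrand_def fun_eq_iff)
  with deform show "pker n r x = - (1 / (2 * of_real pi * \<i>)) *
                      contour_integral (circlepath 1 \<rho>) (pker_integrand (int n - r) r x)"
    by (simp add: pker_def)
qed

lemma circle_log_slope_nonpos:
  fixes a r \<rho> \<Delta> y :: real
  assumes "0 < \<rho>" "\<rho> < 1" "r \<ge> 0" "\<Delta> = 2 * r * (1 - \<rho>)^2 / (2 - \<rho>)^2 - a" "\<Delta> \<ge> 0"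
    and "-1 \<le> y" "y \<le> 1"
  defines "u \<equiv> 1 + \<rho>^2 + 2 * \<rho> * y" and "w \<equiv> 4 + \<rho>^2 + 4 * \<rho> * y"
  shows "u > 0" "w > 0" "a / u - 2 * r / w + \<Delta> / 4 \<le> 0"
proof -
  have u: "u = (1 - \<rho>)^2 + 2 * \<rho> * (1 + y)" and w: "w = (2 - \<rho>)^2 + 4 * \<rho> * (1 + y)"
    by (simp_all add: u_def w_def power2_eq_square algebra_simps)
  have "\<rho> * (1 + y) \<ge> 0" "\<rho> * (1 + y) \<le> 2 * \<rho>" "\<rho> * \<rho> \<le> \<rho>"
    using assms by (auto simp: mult_left_le)
  moreover have "(1 - \<rho>)^2 = 1 - 2 * \<rho> + \<rho> * \<rho>"
    by (simp add: power2_eq_square algebra_simps)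
  moreover have "(2 - \<rho>)^2 > 0" "(1 - \<rho>)^2 > 0"
    using assms by simp_all
  ultimately have u_pos: "u > 0" and w_pos: "w > 0" and u_le: "u \<le> 4"
    using assms unfolding u w by linarith+
  then show "u > 0" "w > 0"
    by simp_all
  \<comment> \<open>the ratio \<open>u / w\<close> of squared moduli is smallest at the point \<open>1 - \<rho>\<close> of the circle\<close>
  have "\<rho>^2 \<le> 1"
    using assms by (simp add: power_le_one)
  then have "2 * \<rho> * (1 + y) * (2 - \<rho>^2) \<ge> 0"
    using assms by (intro mult_nonneg_nonneg) simp_all
  moreover have "u * (2 - \<rho>)^2 - w * (1 - \<rho>)^2 = 2 * \<rho> * (1 + y) * (2 - \<rho>^2)"
    unfolding u w by (simp add: power2_eq_square algebra_simps)
  ultimately have "u * (2 - \<rho>)^2 - w * (1 - \<rho>)^2 \<ge> 0"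
    by simp
  then have "u / w \<ge> (1 - \<rho>)^2 / (2 - \<rho>)^2"
    using u_pos w_pos assms by (simp add: divide_simps mult.commute)
  then have "2 * r * ((1 - \<rho>)^2 / (2 - \<rho>)^2) \<le> 2 * r * (u / w)"
    using assms(3) by (intro mult_left_mono) auto
  then have "(2 * r * (u / w) - a) / u \<ge> \<Delta> / u"
    using u_pos unfolding assms(4) by (simp add: divide_right_mono)
  moreover have "\<Delta> / u \<ge> \<Delta> / 4"
    using u_pos u_le assms(5) by (intro divide_left_mono) auto
  ultimately have "(2 * r * (u / w) - a) / u \<ge> \<Delta> / 4"
    by linarith
  then show "a / u - 2 * r / w + \<Delta> / 4 \<le> 0"
    using u_pos w_pos by (simp add: field_simps)
qed

lemma log_modulus_circle_le:
  fixes a r \<rho> \<Delta> c :: real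
  assumes "0 < \<rho>" "\<rho> < 1" "r \<ge> 0" "\<Delta> = 2 * r * (1 - \<rho>)^2 / (2 - \<rho>)^2 - a" "\<Delta> \<ge> 0"
    and "\<bar>c\<bar> \<le> 1"
  shows "a / 2 * ln (1 + \<rho>^2 + 2 * \<rho> * c) - r / 2 * ln (4 + \<rho>^2 + 4 * \<rho> * c)
           \<le> a * ln (1 - \<rho>) - r * ln (2 - \<rho>) - \<rho> * \<Delta> / 4 * (1 + c)"
proof -
  define G where "G c = a / 2 * ln (1 + \<rho>^2 + 2 * \<rho> * c) - r / 2 * ln (4 + \<rho>^2 + 4 * \<rho> * c)
                        + \<rho> * \<Delta> / 4 * (1 + c)" for c
  have "G c \<le> G (-1)"
  proof (rule DERIV_nonpos_imp_nonincreasing[of "-1" c G])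
    fix y assume "-1 \<le> y" "y \<le> c"
    then have "-1 \<le> y" "y \<le> 1"
      using assms(6) by auto
    note slope = circle_log_slope_nonpos[OF assms(1-5) this]
    have "DERIV G y :> a / 2 * (2 * \<rho> / (1 + \<rho>^2 + 2 * \<rho> * y)) - r / 2 * (4 * \<rho> / (4 + \<rho>^2 + 4 * \<rho> * y))
                        + \<rho> * \<Delta> / 4"
      unfolding G_def using slope(1,2)
      by (auto intro!: derivative_eq_intros simp: divide_simps) (simp add: algebra_simps)
    moreover have "a / 2 * (2 * \<rho> / (1 + \<rho>^2 + 2 * \<rho> * y)) - r / 2 * (4 * \<rho> / (4 + \<rho>^2 + 4 * \<rho> * y))
                     + \<rho> * \<Delta> / 4
                   = \<rho> * (a / (1 + \<rho>^2 + 2 * \<rho> * y) - 2 * r / (4 + \<rho>^2 + 4 * \<rho> * y) + \<Delta> / 4)"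
      by (simp add: algebra_simps)
    ultimately show "\<exists>d. DERIV G y :> d \<and> d \<le> 0"
      using assms(1) slope(3) by (metis less_eq_real_def mult_nonneg_nonpos)
  qed (use assms in auto)
  moreover have "1 + \<rho>^2 - 2 * \<rho> = (1 - \<rho>)^2" "4 + \<rho>^2 - 4 * \<rho> = (2 - \<rho>)^2"
    by (simp_all add: power2_eq_square algebra_simps)
  ultimately show ?thesis
    using assms by (simp add: G_def ln_realpow)
qed

lemma norm_pker_integrand_circlepath_le:
  fixes m r x :: int and \<rho> \<Delta> t :: real
  assumes "1/2 \<le> \<rho>" "\<rho> < 1" "r \<ge> 0" "\<Delta> = 2 * r * (1 - \<rho>)^2 / (2 - \<rho>)^2 - (r - x - 1)" "\<Delta> \<ge> 0"
    and "0 \<le> t" "t \<le> 1"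
  shows "norm (pker_integrand m r x (circlepath 1 \<rho> t)) \<le>
           (1 - \<rho>) powr (r - x - 1) * (2 - \<rho>) powr (- r) * \<rho> powr (- m) / (1 + \<rho> * \<Delta> / 2 * (t - 1/2)^2)"
proof -
  define z where "z = circlepath 1 \<rho> t"
  define c where "c = cos (2 * pi * t)"
  define a where "a = real_of_int (r - x - 1)"
  have z: "z = 1 + of_real \<rho> * cis (2 * pi * t)"
    unfolding z_def by (rule circlepath_eq_cis)
  have "1 + z = of_real 2 + of_real \<rho> * cis (2 * pi * t)"
    unfolding z by simp
  then have norm_sq: "norm z ^ 2 = 1 + \<rho>^2 + 2 * \<rho> * c" "norm (1 + z) ^ 2 = 4 + \<rho>^2 + 4 * \<rho> * c"
    unfolding c_def using norm_of_real_add_cis_sq[of 1 \<rho>] norm_of_real_add_cis_sq[of 2 \<rho>]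
    by (simp_all add: z)
  have norm_diff: "norm (1 - z) = \<rho>"
    using assms(1) by (simp add: z norm_mult)
  then have "norm z \<ge> 1 - \<rho>" "norm (1 + z) \<ge> 2 - \<rho>"
    using norm_triangle_ineq2[of 1 "1 - z"] norm_triangle_ineq2[of 2 "1 - z"] by simp_all
  then have pos: "norm z > 0" "norm (1 + z) > 0"
    using assms(2) by linarith+
  then have "z \<noteq> 0" "z \<noteq> -1" "z \<noteq> 1"
    using norm_diff assms(1) by (auto simp: add_eq_0_iff)
  then have "norm (pker_integrand m r x z) = norm z powr a * norm (1 + z) powr (- r) * \<rho> powr (- m)"
    using norm_pker_integrand norm_diff by (simp add: a_def)
  also have "norm z powr a * norm (1 + z) powr (- r) =
      exp (a / 2 * ln (1 + \<rho>^2 + 2 * \<rho> * c) - r / 2 * ln (4 + \<rho>^2 + 4 * \<rho> * c))"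
    using pos unfolding norm_sq[symmetric]
    by (simp add: powr_def ln_realpow exp_diff exp_minus field_simps)
  also have "\<dots> \<le> exp (a * ln (1 - \<rho>) - r * ln (2 - \<rho>) - \<rho> * \<Delta> / 4 * (1 + c))"
    using log_modulus_circle_le[of \<rho> r \<Delta> a c] assms by (simp add: a_def c_def abs_le_iff)
  also have "\<dots> = exp (a * ln (1 - \<rho>)) * exp (- r * ln (2 - \<rho>)) * exp (- (\<rho> * \<Delta> / 4) * (1 + c))"
    by (simp add: exp_add[symmetric])
  also have "\<dots> = (1 - \<rho>) powr a * (2 - \<rho>) powr (- r) * exp (- (\<rho> * \<Delta> / 4) * (1 + c))"
    using assms(2) by (simp add: powr_def)
  also have "\<dots> \<le> (1 - \<rho>) powr a * (2 - \<rho>) powr (- r) * (1 / (1 + 2 * (\<rho> * \<Delta> / 4) * (t - 1/2)^2))"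
    using exp_neg_one_plus_cos_le[of "\<rho> * \<Delta> / 4" t] assms
    by (intro mult_left_mono) (simp_all add: c_def)
  finally show ?thesis
    unfolding z_def a_def by (simp add: mult_right_mono mult.commute)
qed

lemma norm_pker_le:
  fixes n :: nat and r x :: int and \<rho> \<Delta> :: real
  assumes "1/2 \<le> \<rho>" "\<rho> < 1" "r \<ge> 0" "\<Delta> = 2 * r * (1 - \<rho>)^2 / (2 - \<rho>)^2 - (r - x - 1)" "\<Delta> > 0"
  shows "norm (pker n r x) \<le>
           pi * sqrt (2 * \<rho> / \<Delta>) * ((1 - \<rho>) powr (r - x - 1) * (2 - \<rho>) powr (- r) * \<rho> powr (r - n))"
proof -
  define K where "K = (1 - \<rho>) powr (r - x - 1) * (2 - \<rho>) powr (- r) * \<rho> powr (r - n)"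
  define B where "B = \<rho> * \<Delta> / 2"
  have B: "B > 0"
    using assms by (simp add: B_def)
  have "norm (pker n r x) = norm (contour_integral (circlepath 1 \<rho>) (pker_integrand (int n - r) r x)) / (2 * pi)"
    by (simp add: pker_circlepath(2)[OF assms(1,2)] norm_mult norm_divide)
  also have "\<dots> \<le> 2 * pi * \<rho> * (K * (2 * arctan (sqrt B / 2) / sqrt B)) / (2 * pi)"
    apply (rule divide_right_mono)
  proof (rule norm_contour_integral_circlepath_le[OF pker_circlepath(1)[OF assms(1,2)]])
    show "((\<lambda>t. K * (1 / (1 + B * (t - 1/2)^2))) has_integral K * (2 * arctan (sqrt B / 2) / sqrt B)) {0..1}"
      using has_integral_mult_right[OF has_integral_inverse_one_plus_sq[OF B]] by simp
    fix t :: real assume "t \<in> {0..1}"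
    then show "norm (pker_integrand (int n - r) r x (circlepath 1 \<rho> t)) \<le> K * (1 / (1 + B * (t - 1/2)^2))"
      using norm_pker_integrand_circlepath_le[OF assms(1-4) _, of t "int n - r"] assms(5)
      by (simp add: K_def B_def)
  qed (use assms in simp_all)
  also have "\<dots> = \<rho> * K * (2 * arctan (sqrt B / 2) / sqrt B)"
    by simp
  also have "\<dots> \<le> \<rho> * K * (pi / sqrt B)"
    using B assms(1) arctan_ubound[of "sqrt B / 2"]
    by (intro mult_left_mono divide_right_mono) (auto simp: K_def)
  also have "\<dots> = pi * (\<rho> / sqrt B) * K"
    by simp
  also have "\<rho> / sqrt B = sqrt (2 * \<rho> / \<Delta>)"
    using assms by (simp add: B_def real_sqrt_divide real_sqrt_mult field_simps)
  finally show ?thesis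
    by (simp add: K_def)
qed

section \<open>The saddle point estimate\<close>

lemma saddle_log_value:
  fixes n r x :: real
  shows "(r - x - 1) * ln (sqrt 2 - 1) - r * ln (sqrt 2) - (n - r) * ln (2 - sqrt 2)
           = - n / 2 * ln 2 + (n - 2 * r + x + 1) * ln (sqrt 2 + 1)"
proof -
  have pos: "sqrt 2 - 1 > (0::real)" "2 - sqrt 2 > (0::real)"
    using sqrt2_bounds by auto
  have "(sqrt 2 - 1) * (sqrt 2 + 1) = (1::real)" "(2 - sqrt 2) * (sqrt 2 + 1) = (sqrt 2::real)"
    by (simp_all add: algebra_simps)
  then have "ln (sqrt 2 - 1) + ln (sqrt 2 + 1) = 0" "ln (2 - sqrt 2) + ln (sqrt 2 + 1) = ln (sqrt (2::real))"
    using pos by (metis ln_mult_pos ln_one add_pos_pos zero_less_one real_sqrt_gt_zero zero_less_numeral)+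
  moreover have "ln (sqrt 2) = ln 2 / (2::real)"
    by (simp add: ln_sqrt)
  ultimately have logs: "ln (sqrt 2 - 1) = - ln (sqrt 2 + 1)" "ln (2 - sqrt 2) = ln 2 / 2 - ln (sqrt 2 + 1)"
    "ln (sqrt 2) = ln 2 / (2::real)"
    by linarith+
  show ?thesis
    unfolding logs by (simp add: field_simps)
qed

lemma saddle_phase_numerator_le:
  fixes n r \<delta> :: real
  assumes "n \<ge> 0" "0 \<le> \<delta>" "\<delta> \<le> 0.08"
  defines "\<xi> \<equiv> sqrt 2 - 1 + \<delta>"
  shows "(r - n * sqrt 2 / 2) * ((1 - \<xi>) * (1 + \<xi>)) - r * \<xi> * (1 - \<xi>) + (n - r) * \<xi> * (1 + \<xi>)
           \<le> \<delta> * (n * \<delta> + 3 * \<bar>r - n * (1/2 + sqrt 2 / 4)\<bar>)"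
proof -
  define w where "w = sqrt (2::real)"
  define \<alpha> where "\<alpha> = 1/2 + w / 4"
  have w: "w^2 = 2" "1.414 \<le> w" "w \<le> 1.4143"
    using sqrt2_bounds by (simp_all add: w_def)
  \<comment> \<open>the numerator vanishes at \<open>\<xi> = \<surd>2 - 1\<close>, to second order when \<open>r = n\<alpha>\<close>\<close>
  have num: "(r - n * w / 2) * ((1 - \<xi>) * (1 + \<xi>)) - r * \<xi> * (1 - \<xi>) + (n - r) * \<xi> * (1 + \<xi>)
               = n * \<alpha> * \<delta>^2 - (r - n * \<alpha>) * (\<delta> * (\<xi> + 1 + w))"
    using w(1) by (simp add: \<xi>_def \<alpha>_def w_def[symmetric] field_simps power2_eq_square power3_eq_cube)
  have "\<alpha> \<le> 1"
    using w by (simp add: \<alpha>_def)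
  then have A: "n * \<alpha> * \<delta>^2 \<le> n * \<delta>^2"
    using assms by (intro mult_right_mono mult_left_le) auto
  have X: "0 \<le> \<delta> * (\<xi> + 1 + w)" "\<delta> * (\<xi> + 1 + w) \<le> \<delta> * 3"
    using assms w by (auto simp: \<xi>_def w_def intro!: mult_left_mono)
  then have "- ((r - n * \<alpha>) * (\<delta> * (\<xi> + 1 + w))) \<le> \<bar>r - n * \<alpha>\<bar> * (\<delta> * (\<xi> + 1 + w))"
    by (metis abs_ge_minus_self minus_mult_left mult_right_mono)
  also have "\<dots> \<le> \<bar>r - n * \<alpha>\<bar> * (\<delta> * 3)"
    by (rule mult_left_mono[OF X(2)]) simp
  finally have "n * \<alpha> * \<delta>^2 - (r - n * \<alpha>) * (\<delta> * (\<xi> + 1 + w)) \<le> n * \<delta>^2 + \<bar>r - n * \<alpha>\<bar> * (\<delta> * 3)"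
    using A by linarith
  also have "\<dots> = \<delta> * (n * \<delta> + 3 * \<bar>r - n * \<alpha>\<bar>)"
    by (simp add: power2_eq_square algebra_simps)
  finally show ?thesis
    unfolding num[unfolded w_def] by (simp add: \<alpha>_def w_def)
qed

lemma saddle_phase_derivative_le:
  fixes n r \<delta> :: real
  assumes "n \<ge> 0" "0 \<le> \<delta>" "\<delta> \<le> 0.08"
  defines "\<xi> \<equiv> sqrt 2 - 1 + \<delta>"
  shows "(r - n * sqrt 2 / 2) / \<xi> - r / (1 + \<xi>) + (n - r) / (1 - \<xi>)
           \<le> 4 * \<delta> * (n * \<delta> + 3 * \<bar>r - n * (1/2 + sqrt 2 / 4)\<bar>)"
proof -
  define M where "M = \<delta> * (n * \<delta> + 3 * \<bar>r - n * (1/2 + sqrt 2 / 4)\<bar>)"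
  have \<xi>: "0.414 \<le> \<xi>" "\<xi> \<le> 0.4943"
    using sqrt2_bounds assms by (simp_all add: \<xi>_def)
  have "\<xi>^2 \<le> 0.4943^2"
    using \<xi> by (intro power_mono) auto
  then have "0.414 * 0.75 \<le> \<xi> * (1 - \<xi>^2)"
    using \<xi> by (intro mult_mono) (auto simp: power2_eq_square)
  then have den: "0.3 \<le> \<xi> * ((1 - \<xi>) * (1 + \<xi>))"
    by (simp add: power2_eq_square algebra_simps)
  have "\<xi> \<noteq> 0" "1 - \<xi> \<noteq> 0" "1 + \<xi> \<noteq> 0"
    using \<xi> by auto
  then have "(r - n * sqrt 2 / 2) / \<xi> - r / (1 + \<xi>) + (n - r) / (1 - \<xi>) =
      ((r - n * sqrt 2 / 2) * ((1 - \<xi>) * (1 + \<xi>)) - r * \<xi> * (1 - \<xi>) + (n - r) * \<xi> * (1 + \<xi>))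
        / (\<xi> * ((1 - \<xi>) * (1 + \<xi>)))"
    by (simp add: add_divide_distrib diff_divide_distrib)
  also have "\<dots> \<le> M / (\<xi> * ((1 - \<xi>) * (1 + \<xi>)))"
    using saddle_phase_numerator_le[OF assms(1-3), of r] den by (simp add: \<xi>_def M_def divide_right_mono)
  also have "\<dots> \<le> M / 0.3"
    using den assms by (intro divide_left_mono) (auto simp: M_def)
  also have "\<dots> \<le> 4 * M"
    using assms by (simp add: M_def)
  finally show ?thesis
    by (simp add: M_def mult.assoc)
qed

lemma saddle_log_increment_le:
  fixes n r x s :: real
  assumes "n \<ge> 0" "0 < s" "s \<le> 0.08"
  defines "F \<equiv> \<lambda>z. (r - x - 1) * ln z - r * ln (1 + z) - (n - r) * ln (1 - z)"
  shows "F (sqrt 2 - 1 + s) \<le> F (sqrt 2 - 1) + 4 * s^2 * (n * s + 3 * \<bar>r - n * (1/2 + sqrt 2 / 4)\<bar>)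
           - (x - n * sqrt 2 / 2 + 1) * ln (1 + s / (sqrt 2 - 1))"
proof -
  define z\<^sub>0 where "z\<^sub>0 = sqrt 2 - (1::real)"
  define M where "M = n * s + 3 * \<bar>r - n * (1/2 + sqrt 2 / 4)\<bar>"
  define \<Phi> where "\<Phi> z = (r - n * sqrt 2 / 2) * ln z - r * ln (1 + z) - (n - r) * ln (1 - z)" for z
  define \<Phi>' where "\<Phi>' z = (r - n * sqrt 2 / 2) / z - r / (1 + z) + (n - r) / (1 - z)" for z
  have z\<^sub>0: "0.414 \<le> z\<^sub>0" "z\<^sub>0 + s \<le> 0.5"
    using sqrt2_bounds assms by (auto simp: z\<^sub>0_def)
  have "\<forall>z. z\<^sub>0 \<le> z \<and> z \<le> z\<^sub>0 + s \<longrightarrow> DERIV \<Phi> z :> \<Phi>' z"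
    using z\<^sub>0 unfolding \<Phi>_def \<Phi>'_def
    by (auto intro!: derivative_eq_intros simp: divide_simps) (simp add: algebra_simps)
  then obtain \<xi> where \<xi>: "z\<^sub>0 < \<xi>" "\<xi> < z\<^sub>0 + s" and mvt: "\<Phi> (z\<^sub>0 + s) - \<Phi> z\<^sub>0 = s * \<Phi>' \<xi>"
    using MVT2[of z\<^sub>0 "z\<^sub>0 + s" \<Phi> \<Phi>'] assms(2) by auto
  have "\<Phi>' \<xi> \<le> 4 * (\<xi> - z\<^sub>0) * (n * (\<xi> - z\<^sub>0) + 3 * \<bar>r - n * (1/2 + sqrt 2 / 4)\<bar>)"
    using saddle_phase_derivative_le[of n "\<xi> - z\<^sub>0" r] \<xi> assms by (simp add: \<Phi>'_def z\<^sub>0_def)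
  also have "\<dots> \<le> 4 * s * M"
    using \<xi> assms by (auto simp: M_def intro!: mult_mono add_mono)
  finally have inc: "\<Phi> (z\<^sub>0 + s) - \<Phi> z\<^sub>0 \<le> 4 * s^2 * M"
    using mvt assms(2) mult_left_mono[of "\<Phi>' \<xi>" "4 * s * M" s] by (simp add: power2_eq_square mult_ac)
  have "1 + s / z\<^sub>0 = (z\<^sub>0 + s) / z\<^sub>0"
    using z\<^sub>0 by (simp add: field_simps)
  then have "ln (z\<^sub>0 + s) - ln z\<^sub>0 = ln (1 + s / z\<^sub>0)"
    using z\<^sub>0 assms by (simp add: ln_div)
  moreover have "F (z\<^sub>0 + s) - F z\<^sub>0 =
      \<Phi> (z\<^sub>0 + s) - \<Phi> z\<^sub>0 - (x - n * sqrt 2 / 2 + 1) * (ln (z\<^sub>0 + s) - ln z\<^sub>0)"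
    by (simp add: F_def \<Phi>_def field_simps)
  ultimately have "F (z\<^sub>0 + s) - F z\<^sub>0 = \<Phi> (z\<^sub>0 + s) - \<Phi> z\<^sub>0 - (x - n * sqrt 2 / 2 + 1) * ln (1 + s / z\<^sub>0)"
    by simp
  with inc show ?thesis
    unfolding M_def z\<^sub>0_def by linarith
qed

lemma ln_saddle_ratio_bounds:
  fixes s :: real
  assumes "0 < s" "s \<le> 0.08"
  shows "2 * s \<le> ln (1 + s / (sqrt 2 - 1))" "ln (1 + s / (sqrt 2 - 1)) \<le> 5 / 2 * s"
proof -
  define z\<^sub>0 where "z\<^sub>0 = sqrt 2 - (1::real)"
  have z\<^sub>0: "0.4 \<le> z\<^sub>0" "z\<^sub>0 + s \<le> 0.5"
    using sqrt2_bounds assms by (auto simp: z\<^sub>0_def)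
  have "ln (1 + s / z\<^sub>0) \<le> s / z\<^sub>0"
    using z\<^sub>0 assms by (intro ln_add_one_self_le_self) simp
  also have "\<dots> \<le> s / 0.4"
    using z\<^sub>0 assms by (intro divide_left_mono) auto
  finally show "ln (1 + s / (sqrt 2 - 1)) \<le> 5 / 2 * s"
    by (simp add: z\<^sub>0_def)
  have "2 * s * (z\<^sub>0 + s) \<le> s"
    using z\<^sub>0 assms mult_left_mono[of "z\<^sub>0 + s" "1/2" "2 * s"] by simp
  then have "2 * s \<le> s / (z\<^sub>0 + s)"
    using z\<^sub>0 assms by (simp add: field_simps)
  also have "\<dots> = - (z\<^sub>0 / (z\<^sub>0 + s) - 1)"
    using z\<^sub>0 assms by (simp add: field_simps)
  also have "\<dots> \<le> - ln (z\<^sub>0 / (z\<^sub>0 + s))"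
    using ln_le_minus_one[of "z\<^sub>0 / (z\<^sub>0 + s)"] z\<^sub>0 assms by simp
  also have "\<dots> = ln (1 + s / z\<^sub>0)"
    using z\<^sub>0 assms by (simp add: ln_div field_simps)
  finally show "2 * s \<le> ln (1 + s / (sqrt 2 - 1))"
    by (simp add: z\<^sub>0_def)
qed

lemma saddle_Delta_ge:
  fixes n r x s :: real
  assumes "n \<ge> 0" "0 < s" "s \<le> 0.08"
  defines "N \<equiv> n * s - 2 * \<bar>r - n * (1/2 + sqrt 2 / 4)\<bar> + 3 * min (x - n * sqrt 2 / 2 + 1) 0"
  assumes "N \<ge> 0"
  shows "N / 3 \<le> 2 * r * (sqrt 2 - 1 + s)^2 / (sqrt 2 + s)^2 - (r - x - 1)"
proof -
  define w where "w = sqrt (2::real)"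
  define z where "z = w - 1 + s"
  define \<alpha> where "\<alpha> = 1/2 + w / 4"
  define D where "D = x - n * w / 2 + 1"
  have w: "w^2 = 2" "1.414 \<le> w" "w \<le> 1.4143"
    using sqrt2_bounds by (simp_all add: w_def)
  have z: "0.4 \<le> z" "z \<le> 0.5"
    using w assms by (simp_all add: z_def)
  have "(1 + z)^2 \<le> 1.5^2" "(1 - z)^2 \<le> 1^2"
    using z by (intro power_mono; simp)+
  then have "(1 + z)^2 \<le> 3" "(1 - z)^2 \<le> 1"
    by (simp_all add: power2_eq_square)
  moreover have "2 * z^2 - (1 + z)^2 = (1 - z)^2 - 2"
    by (simp add: power2_eq_square algebra_simps)
  ultimately have sq: "0 < (1 + z)^2" "(1 + z)^2 \<le> 3" "\<bar>2 * z^2 - (1 + z)^2\<bar> \<le> 2"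
    using z by (auto simp: abs_le_iff)
  have "2 * r * z^2 - (r - x - 1) * (1 + z)^2
          = n * s * (1 + (1/2 + 3 * w / 4) * s) + (r - n * \<alpha>) * (2 * z^2 - (1 + z)^2) + D * (1 + z)^2"
    using w(1) by (simp add: z_def \<alpha>_def D_def power2_eq_square field_simps)
  moreover have "n * s \<le> n * s * (1 + (1/2 + 3 * w / 4) * s)"
    using assms w mult_left_mono[of 1 "1 + (1/2 + 3 * w / 4) * s" "n * s"] by simp
  moreover have "- 2 * \<bar>r - n * \<alpha>\<bar> \<le> (r - n * \<alpha>) * (2 * z^2 - (1 + z)^2)"
    using sq(3) abs_mult[of "r - n * \<alpha>" "2 * z^2 - (1 + z)^2"]
      mult_left_mono[OF sq(3), of "\<bar>r - n * \<alpha>\<bar>"] by (simp add: abs_le_iff)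
  moreover have "3 * min D 0 \<le> D * (1 + z)^2"
    using sq by (cases "D \<ge> 0") (auto intro: mult_left_mono_neg)
  ultimately have N: "N \<le> 2 * r * z^2 - (r - x - 1) * (1 + z)^2"
    unfolding N_def by (simp add: w_def \<alpha>_def D_def)
  then have "N / 3 \<le> (2 * r * z^2 - (r - x - 1) * (1 + z)^2) / 3"
    by (simp add: divide_right_mono)
  also have "\<dots> \<le> (2 * r * z^2 - (r - x - 1) * (1 + z)^2) / (1 + z)^2"
    using sq N assms(5) by (intro divide_left_mono) auto
  also have "\<dots> = 2 * r * z^2 / (1 + z)^2 - (r - x - 1)"
    using sq by (simp add: diff_divide_distrib)
  also have "1 + z = sqrt 2 + s"
    by (simp add: z_def w_def)
  finally show ?thesis
    by (simp add: z_def w_def)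
qed

lemma neg_mul_ln_saddle_ratio_le:
  fixes s D E :: real
  assumes "0 < s" "s \<le> 0.08" "0 \<le> E" "- E \<le> D"
  shows "- (D * ln (1 + s / (sqrt 2 - 1))) \<le> E * s / 2 - 2 * s * D"
proof -
  define L where "L = ln (1 + s / (sqrt 2 - 1))"
  have L: "2 * s \<le> L" "L \<le> 5 / 2 * s"
    using ln_saddle_ratio_bounds[OF assms(1,2)] by (simp_all add: L_def)
  show ?thesis
  proof (cases "D \<ge> 0")
    case True
    then have "D * (2 * s) \<le> D * L"
      using L by (intro mult_left_mono) auto
    moreover have "0 \<le> E * s / 2"
      using assms by simp
    ultimately show ?thesis
      by (simp add: L_def mult_ac)
  next
    case False
    then have "- (D * L) \<le> - D * (5 / 2 * s)"
      using L mult_left_mono[of L "5 / 2 * s" "- D"] by simp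
    moreover have "- D * s \<le> E * s"
      using assms by (intro mult_right_mono) auto
    ultimately show ?thesis
      by (simp add: L_def algebra_simps)
  qed
qed

lemma saddle_increment_error_le:
  fixes n r q \<sigma> T :: real
  assumes "q \<ge> 1" "n = q^3" "\<bar>r - n * (1/2 + sqrt 2 / 4)\<bar> \<le> T * q^2 + 1"
  defines "s \<equiv> \<sigma> / q"
  shows "4 * s^2 * (n * s + 3 * \<bar>r - n * (1/2 + sqrt 2 / 4)\<bar>) \<le> 4 * \<sigma>^2 * (\<sigma> + 3 * (T + 1))"
proof -
  have cube: "s^2 * n * s = \<sigma>^3"
    using assms by (simp add: s_def power2_eq_square power3_eq_cube)
  have "s^2 * (T * q^2 + 1) = \<sigma>^2 * T + \<sigma>^2 / q^2"
    using assms(1) by (simp add: s_def field_simps)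
  moreover have "\<sigma>^2 / q^2 \<le> \<sigma>^2 / 1"
    using assms(1) one_le_power[of q 2] by (intro divide_left_mono) auto
  ultimately have "s^2 * (T * q^2 + 1) \<le> \<sigma>^2 * (T + 1)"
    by (simp add: algebra_simps)
  then have "s^2 * \<bar>r - n * (1/2 + sqrt 2 / 4)\<bar> \<le> \<sigma>^2 * (T + 1)"
    using mult_left_mono[OF assms(3), of "s^2"] by simp
  with cube show ?thesis
    by (simp add: power2_eq_square power3_eq_cube algebra_simps)
qed

lemma saddle_exponent_le:
  fixes n r x q \<sigma> T Z :: real
  defines "s \<equiv> \<sigma> / q"
  assumes "q \<ge> 1" "n = q^3" "\<sigma> > 0" "s \<le> 0.08" "Z \<ge> 0"
    and "\<bar>r - n * (1/2 + sqrt 2 / 4)\<bar> \<le> T * q^2 + 1"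
    and "x - n * sqrt 2 / 2 + 1 \<ge> - (Z * q + 1)"
  shows "(r - x - 1) * ln (sqrt 2 - 1 + s) - r * ln (sqrt 2 + s) - (n - r) * ln (2 - sqrt 2 - s)
           \<le> - n / 2 * ln 2 + (n - 2 * r + x + 1) * ln (sqrt 2 + 1) + 4 * \<sigma>^2 * (\<sigma> + 3 * (T + 1))
              + \<sigma> * (Z + 1) - 2 * \<sigma> * (x - n * sqrt 2 / 2 + 1) / q"
proof -
  define D where "D = x - n * sqrt 2 / 2 + 1"
  have s: "0 < s" "s * q = \<sigma>" "s \<le> \<sigma>"
    using assms mult_left_mono[of 1 q \<sigma>] by (simp_all add: s_def divide_le_eq)
  have "n \<ge> 0"
    using assms by simp
  from saddle_log_increment_le[OF this s(1) assms(5), of r x]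
  have "(r - x - 1) * ln (sqrt 2 - 1 + s) - r * ln (sqrt 2 + s) - (n - r) * ln (2 - sqrt 2 - s)
          \<le> (r - x - 1) * ln (sqrt 2 - 1) - r * ln (sqrt 2) - (n - r) * ln (2 - sqrt 2)
             + 4 * s^2 * (n * s + 3 * \<bar>r - n * (1/2 + sqrt 2 / 4)\<bar>) - D * ln (1 + s / (sqrt 2 - 1))"
    by (simp add: D_def algebra_simps)
  moreover have "- (D * ln (1 + s / (sqrt 2 - 1))) \<le> (Z * q + 1) * s / 2 - 2 * s * D"
    using neg_mul_ln_saddle_ratio_le[OF s(1) assms(5)] assms(2,6,8) by (simp add: D_def)
  moreover have "(Z * q + 1) * s = Z * \<sigma> + s"
    using s(2) by (simp add: algebra_simps)
  moreover have "\<sigma> * (Z + 1) = Z * \<sigma> + \<sigma>"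
    by (simp add: algebra_simps)
  moreover have "0 \<le> (Z * q + 1) * s" "2 * s * D = 2 * \<sigma> * D / q"
    using s assms by (simp_all add: s_def)
  ultimately show ?thesis
    using saddle_increment_error_le[OF assms(2,3,7), of \<sigma>, folded s_def] saddle_log_value[of r x n] s(3)
    unfolding D_def[symmetric] by linarith
qed

lemma saddle_Delta_ge_sq:
  fixes n r x q T Z :: real
  defines "\<sigma> \<equiv> 2 * T + 2"
  defines "s \<equiv> \<sigma> / q"
  assumes "T \<ge> 0" "Z \<ge> 0" "n = q^3" "q \<ge> 13 * \<sigma> + 3 * Z + 5"
    and "\<bar>r - n * (1/2 + sqrt 2 / 4)\<bar> \<le> T * q^2 + 1"
    and "x - n * sqrt 2 / 2 + 1 \<ge> - (Z * q + 1)"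
  shows "r \<ge> 0" "q^2 / 3 \<le> 2 * r * (sqrt 2 - 1 + s)^2 / (sqrt 2 + s)^2 - (r - x - 1)"
proof -
  have q: "q \<ge> 1" "3 * (Z * q) + 5 \<le> q * (3 * Z + 5)" "q * (3 * Z + 5) \<le> q^2" "0 \<le> Z * q"
    using assms mult_left_mono[of "3 * Z + 5" q q] by (simp_all add: \<sigma>_def power2_eq_square algebra_simps)
  have "q^2 * (T + 1) \<le> q^2 * (q / 2)"
    using assms by (intro mult_left_mono) (auto simp: \<sigma>_def)
  also have "\<dots> \<le> n * (1/2 + sqrt 2 / 4)"
    using assms(5) q(1) by (simp add: power2_eq_square power3_eq_cube algebra_simps)
  finally show "r \<ge> 0"
    using assms(7) one_le_power[OF q(1), of 2] unfolding abs_le_iff by (simp add: algebra_simps)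
  define N where "N = n * s - 2 * \<bar>r - n * (1/2 + sqrt 2 / 4)\<bar> + 3 * min (x - n * sqrt 2 / 2 + 1) 0"
  have "n * s = 2 * (T * q^2) + 2 * q^2"
    using assms(5) q by (simp add: s_def \<sigma>_def power2_eq_square power3_eq_cube field_simps)
  moreover have "min (x - n * sqrt 2 / 2 + 1) 0 \<ge> - (Z * q + 1)"
    using assms(8) q by simp
  ultimately have "q^2 \<le> N"
    using assms(7) q unfolding N_def by (smt (verit))
  then have "0 \<le> N"
    using zero_le_power2[of q] by linarith
  moreover have "0 < s" "s \<le> 0.08" "n \<ge> 0"
    using assms q by (simp_all add: s_def \<sigma>_def divide_simps)
  ultimately have "N / 3 \<le> 2 * r * (sqrt 2 - 1 + s)^2 / (sqrt 2 + s)^2 - (r - x - 1)"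
    using saddle_Delta_ge[of n s r x, folded N_def] by blast
  with \<open>q^2 \<le> N\<close> show "q^2 / 3 \<le> 2 * r * (sqrt 2 - 1 + s)^2 / (sqrt 2 + s)^2 - (r - x - 1)"
    by linarith
qed

lemma norm_pker_saddle_le:
  fixes n :: nat and r x :: int and q T Z :: real
  defines "\<sigma> \<equiv> 2 * T + 2"
  assumes "T \<ge> 0" "Z \<ge> 0" "real n = q^3" "q \<ge> 13 * \<sigma> + 3 * Z + 5"
    and "\<bar>r - n * (1/2 + sqrt 2 / 4)\<bar> \<le> T * q^2 + 1"
    and "x - n * sqrt 2 / 2 + 1 \<ge> - (Z * q + 1)"
  shows "norm (pker n r x) \<le> pi * sqrt 6 / q *
           exp (- n / 2 * ln 2 + (n - 2 * r + x + 1) * ln (sqrt 2 + 1) + 4 * \<sigma>^2 * (\<sigma> + 3 * (T + 1))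
                + \<sigma> * (Z + 1) - 2 * \<sigma> * (x - n * sqrt 2 / 2 + 1) / q)"
proof -
  define s where "s = \<sigma> / q"
  define \<rho> where "\<rho> = 2 - sqrt 2 - s"
  define \<Delta> where "\<Delta> = 2 * r * (1 - \<rho>)^2 / (2 - \<rho>)^2 - (r - x - 1)"
  define E where "E = - n / 2 * ln 2 + (n - 2 * r + x + 1) * ln (sqrt 2 + 1) + 4 * \<sigma>^2 * (\<sigma> + 3 * (T + 1))
                        + \<sigma> * (Z + 1) - 2 * \<sigma> * (x - n * sqrt 2 / 2 + 1) / q"
  note saddle = saddle_Delta_ge_sq[OF assms(2-7)[unfolded \<sigma>_def], folded \<sigma>_def s_def]
  have q: "q \<ge> 1" and s: "0 < s" "s \<le> 1/13"
    using assms by (simp_all add: s_def \<sigma>_def divide_simps)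
  have "\<sigma> > 0"
    using assms(2) by (simp add: \<sigma>_def)
  have "\<sigma> / q \<le> 0.08"
    using s(2) by (simp flip: s_def)
  have "1 < sqrt (2::real)" "sqrt (2::real) \<le> 71/50"
    by (simp, rule real_le_lsqrt) (simp_all add: power2_eq_square)
  then have \<rho>: "1/2 \<le> \<rho>" "\<rho> < 1" "1 - \<rho> = sqrt 2 - 1 + s" "2 - \<rho> = sqrt 2 + s"
    using s unfolding \<rho>_def by linarith+
  have "q^2 / 3 \<le> \<Delta>"
    using saddle(2) by (simp add: \<Delta>_def \<rho>)
  moreover have "0 < q^2 / 3"
    using q by simp
  ultimately have \<Delta>: "q^2 / 3 \<le> \<Delta>" "\<Delta> > 0"
    by linarith+
  have "(1 - \<rho>) powr (r - x - 1) * (2 - \<rho>) powr (- r) * \<rho> powr (r - n) =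
      exp ((r - x - 1) * ln (sqrt 2 - 1 + s) - r * ln (sqrt 2 + s) - (n - r) * ln (2 - sqrt 2 - s))"
    using \<rho> by (simp add: powr_def exp_add[symmetric] \<rho>_def algebra_simps)
  also have "\<dots> \<le> exp E"
    using saddle_exponent_le[OF q assms(4) \<open>\<sigma> > 0\<close> \<open>\<sigma> / q \<le> 0.08\<close> assms(3,6,7), folded s_def]
    by (simp add: E_def)
  finally have K: "(1 - \<rho>) powr (r - x - 1) * (2 - \<rho>) powr (- r) * \<rho> powr (r - n) \<le> exp E" .
  have "sqrt (2 * \<rho> / \<Delta>) \<le> sqrt (2 / (q^2 / 3))"
    using \<Delta> \<rho> q by (intro real_sqrt_le_mono frac_le) auto
  also have "\<dots> = sqrt 6 / q"
    using q by (simp add: real_sqrt_divide)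
  finally have "pi * sqrt (2 * \<rho> / \<Delta>) * ((1 - \<rho>) powr (r - x - 1) * (2 - \<rho>) powr (- r) * \<rho> powr (r - n))
                 \<le> pi * (sqrt 6 / q) * exp E"
    using K \<Delta> \<rho>(1,2) q by (intro mult_mono mult_left_mono) auto
  with norm_pker_le[where n = n, OF \<rho>(1,2) _ \<Delta>_def \<Delta>(2)] saddle(1)
  have "norm (pker n r x) \<le> pi * (sqrt 6 / q) * exp E"
    by simp
  then show ?thesis
    by (simp add: E_def)
qed

section \<open>The scaling limit\<close>

lemma lsc_bounds:
  "real_of_int (lsc n t) \<le> n * (1/2 + sqrt 2 / 4) + 2 powr (-7/6) * t * n powr (2/3)"
  "n * (1/2 + sqrt 2 / 4) + 2 powr (-7/6) * t * n powr (2/3) < real_of_int (lsc n t) + 1"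
proof -
  have eq: "1 / (2 * sqrt 2) = sqrt (2::real) / 4"
    by (simp add: field_simps)
  show "real_of_int (lsc n t) \<le> n * (1/2 + sqrt 2 / 4) + 2 powr (-7/6) * t * n powr (2/3)"
    "n * (1/2 + sqrt 2 / 4) + 2 powr (-7/6) * t * n powr (2/3) < real_of_int (lsc n t) + 1"
    unfolding lsc_def eq by simp_all
qed

lemma vsc_bounds:
  "real_of_int (vsc n \<zeta>) \<le> n * sqrt 2 / 2 + 2 powr (-5/6) * \<zeta> * n powr (1/3)"
  "n * sqrt 2 / 2 + 2 powr (-5/6) * \<zeta> * n powr (1/3) < real_of_int (vsc n \<zeta>) + 1"
proof -
  have eq: "real n / sqrt 2 = n * sqrt 2 / 2"
    by (simp add: field_simps)
  show "real_of_int (vsc n \<zeta>) \<le> n * sqrt 2 / 2 + 2 powr (-5/6) * \<zeta> * n powr (1/3)"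
    "n * sqrt 2 / 2 + 2 powr (-5/6) * \<zeta> * n powr (1/3) < real_of_int (vsc n \<zeta>) + 1"
    unfolding vsc_def eq by simp_all
qed

lemma jsc_bounds:
  "real_of_int (jsc n y) \<le> 2 powr (-5/6) * y * n powr (1/3)"
  "2 powr (-5/6) * y * n powr (1/3) < real_of_int (jsc n y) + 1"
  unfolding jsc_def by simp_all

lemma lsc_deviation_le:
  assumes "\<bar>t\<bar> \<le> T"
  shows "\<bar>lsc n t - n * (1/2 + sqrt 2 / 4)\<bar> \<le> T * (n powr (1/3))^2 + 1"
proof -
  have sq: "n powr (2/3) = (n powr (1/3))^2"
    by (cases "n = 0") (simp_all add: powr_power)
  have "2 powr (-7/6) * \<bar>t\<bar> * n powr (2/3) \<le> 1 * T * n powr (2/3)"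
    using assms powr_mono[of "-7/6" 0 "2::real"] by (intro mult_right_mono mult_mono) auto
  then have "\<bar>2 powr (-7/6) * t * n powr (2/3)\<bar> \<le> T * n powr (2/3)"
    by (simp add: abs_mult)
  then show ?thesis
    using lsc_bounds[where n = n and t = t] unfolding sq[symmetric] abs_le_iff by (intro conjI; linarith)
qed

lemma vsc_add_jsc_ge:
  "vsc n \<zeta> + jsc n y - n * sqrt 2 / 2 + 1 \<ge> 2 powr (-5/6) * (y + \<zeta>) * n powr (1/3) - 1"
  using vsc_bounds[where n = n and \<zeta> = \<zeta>] jsc_bounds[where n = n and y = y]
  by (simp add: algebra_simps)

lemma vsc_add_jsc_ge_neg:
  assumes "Z \<ge> 0" "y + \<zeta> \<ge> - Z"
  shows "vsc n \<zeta> + jsc n y - n * sqrt 2 / 2 + 1 \<ge> - (Z * n powr (1/3) + 1)"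
proof -
  have "- Z \<le> 2 powr (-5/6) * (y + \<zeta>)"
  proof (cases "y + \<zeta> \<ge> 0")
    case True
    then show ?thesis
      using assms(1) by (smt (verit) mult_nonneg_nonneg powr_ge_zero)
  next
    case False
    then have "1 * (y + \<zeta>) \<le> 2 powr (-5/6) * (y + \<zeta>)"
      using powr_mono[of "-5/6" 0 "2::real"] by (intro mult_right_mono_neg) auto
    then show ?thesis
      using assms(2) by simp
  qed
  then have "- Z * n powr (1/3) \<le> 2 powr (-5/6) * (y + \<zeta>) * n powr (1/3)"
    by (intro mult_right_mono) auto
  then show ?thesis
    using vsc_add_jsc_ge[where n = n and \<zeta> = \<zeta> and y = y] by simp
qed

lemma Psc_exponent_le:
  "2 powr (-1/6) * t * n powr (2/3) - 2 powr (-5/6) * \<zeta> * n powr (1/3) + n - 2 * lsc n t + vsc n \<zeta> + 1 \<le> 3"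
proof -
  have "2 powr (-1/6) = 2 * 2 powr (-7/6 :: real)"
    using powr_add[of "2::real" 1 "-7/6"] by simp
  then show ?thesis
    using lsc_bounds[where n = n and t = t] vsc_bounds[where n = n and \<zeta> = \<zeta>]
    by (simp add: algebra_simps)
qed

lemma norm_Psc_eq:
  "norm (Psc n t y \<zeta>) = 2 powr (-5/6) * n powr (1/3) *
     exp (n / 2 * ln 2 + (- jsc n y - 2 powr (-5/6) * \<zeta> * n powr (1/3) + 2 powr (-1/6) * t * n powr (2/3))
                         * ln (sqrt 2 + 1))
     * norm (pker n (lsc n t) (vsc n \<zeta> + jsc n y))"
proof -
  have "sqrt 2 + 1 \<noteq> (0::real)"
    by (smt (verit) real_sqrt_ge_zero)
  then show ?thesis
    unfolding Psc_def norm_mult norm_of_real by (simp add: powr_def exp_add abs_mult mult_ac)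
qed

lemma norm_Psc_le_saddle:
  fixes n :: nat and t y \<zeta> T Z :: real
  defines "\<sigma> \<equiv> 2 * T + 2" and "q \<equiv> n powr (1/3)" and "D \<equiv> vsc n \<zeta> + jsc n y - n * sqrt 2 / 2 + 1"
  assumes "\<bar>t\<bar> \<le> T" "Z \<ge> 0" "y + \<zeta> \<ge> - Z" "q \<ge> 13 * \<sigma> + 3 * Z + 5"
  shows "norm (Psc n t y \<zeta>) \<le> 2 powr (-5/6) * pi * sqrt 6 *
           exp (3 * ln (sqrt 2 + 1) + 4 * \<sigma>^2 * (\<sigma> + 3 * (T + 1)) + \<sigma> * (Z + 1) - 2 * \<sigma> * D / q)"
proof -
  define r where "r = lsc n t"
  define x where "x = vsc n \<zeta> + jsc n y"
  define e where "e = - jsc n y - 2 powr (-5/6) * \<zeta> * q + 2 powr (-1/6) * t * n powr (2/3)"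
  define E where "E = 4 * \<sigma>^2 * (\<sigma> + 3 * (T + 1)) + \<sigma> * (Z + 1) - 2 * \<sigma> * D / q"
  have "T \<ge> 0" "q \<ge> 1"
    using assms by (simp_all add: \<sigma>_def)
  then have "n \<noteq> 0"
    by (cases "n = 0") (auto simp: q_def)
  then have n: "real n = q^3"
    by (simp add: q_def powr_power)
  have pk: "norm (pker n r x) \<le> pi * sqrt 6 / q * exp (- n / 2 * ln 2 + (n - 2 * r + x + 1) * ln (sqrt 2 + 1) + E)"
    using norm_pker_saddle_le[OF \<open>T \<ge> 0\<close> assms(5) n, of r x] assms(7)[unfolded \<sigma>_def]
      lsc_deviation_le[OF assms(4), where n = n] vsc_add_jsc_ge_neg[OF assms(5,6), where n = n]
    by (simp add: r_def x_def q_def D_def E_def \<sigma>_def algebra_simps)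
  have "norm (Psc n t y \<zeta>) = 2 powr (-5/6) * q * exp (n / 2 * ln 2 + e * ln (sqrt 2 + 1)) * norm (pker n r x)"
    by (simp add: norm_Psc_eq q_def e_def r_def x_def)
  also have "\<dots> \<le> 2 powr (-5/6) * q * exp (n / 2 * ln 2 + e * ln (sqrt 2 + 1)) *
      (pi * sqrt 6 / q * exp (- n / 2 * ln 2 + (n - 2 * r + x + 1) * ln (sqrt 2 + 1) + E))"
    using pk \<open>q \<ge> 1\<close> by (intro mult_left_mono) auto
  also have "\<dots> = 2 powr (-5/6) * pi * sqrt 6 * exp ((e + n - 2 * r + x + 1) * ln (sqrt 2 + 1) + E)"
    using \<open>q \<ge> 1\<close> by (simp add: mult_exp_exp algebra_simps)
  also have "\<dots> \<le> 2 powr (-5/6) * pi * sqrt 6 * exp (3 * ln (sqrt 2 + 1) + E)"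
  proof -
    have "e + n - 2 * r + x + 1 \<le> 3"
      using Psc_exponent_le[where t = t and n = n and \<zeta> = \<zeta>] by (simp add: e_def r_def x_def q_def)
    then have "(e + n - 2 * r + x + 1) * ln (sqrt 2 + 1) \<le> 3 * ln (sqrt 2 + 1)"
      by (intro mult_right_mono) auto
    then show ?thesis
      by simp
  qed
  finally show ?thesis
    by (simp add: E_def algebra_simps)
qed

lemma norm_Psc_le:
  fixes n :: nat and t y \<zeta> T Z :: real
  defines "\<sigma> \<equiv> 2 * T + 2"
  assumes "\<bar>t\<bar> \<le> T" "Z \<ge> 0" "y + \<zeta> \<ge> - Z" "n powr (1/3) \<ge> 13 * \<sigma> + 3 * Z + 5"
  shows "norm (Psc n t y \<zeta>) \<le>
           pi * sqrt 6 * exp (3 * ln (sqrt 2 + 1) + 4 * \<sigma>^2 * (\<sigma> + 3 * (T + 1)) + \<sigma> * (Z + 1) + 2 * \<sigma>)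
           * exp (- (2 * 2 powr (-5/6) * \<sigma>) * (y + \<zeta>))"
proof -
  define q where "q = real n powr (1/3)"
  define c where "c = (2::real) powr (-5/6)"
  define D where "D = vsc n \<zeta> + jsc n y - n * sqrt 2 / 2 + 1"
  define C where "C = 3 * ln (sqrt 2 + 1) + 4 * \<sigma>^2 * (\<sigma> + 3 * (T + 1)) + \<sigma> * (Z + 1)"
  have "\<sigma> \<ge> 0" "q \<ge> 1" "0 < c" "c \<le> 1"
    using assms powr_mono[of "-5/6" 0 "2::real"] by (simp_all add: \<sigma>_def q_def c_def)
  have "2 * \<sigma> * (c * (y + \<zeta>) * q - 1) / q \<le> 2 * \<sigma> * D / q"
    using vsc_add_jsc_ge[where n = n and \<zeta> = \<zeta> and y = y] \<open>\<sigma> \<ge> 0\<close> \<open>q \<ge> 1\<close>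
    by (intro divide_right_mono mult_left_mono) (auto simp: D_def c_def q_def)
  moreover have "2 * \<sigma> * (c * (y + \<zeta>) * q - 1) / q = 2 * c * \<sigma> * (y + \<zeta>) - 2 * \<sigma> / q"
    using \<open>q \<ge> 1\<close> by (simp add: field_simps)
  moreover have "2 * \<sigma> / q \<le> 2 * \<sigma>"
    using \<open>\<sigma> \<ge> 0\<close> \<open>q \<ge> 1\<close> by (simp add: divide_le_eq mult_le_cancel_left1)
  ultimately have "C - 2 * \<sigma> * D / q \<le> C + 2 * \<sigma> - 2 * c * \<sigma> * (y + \<zeta>)"
    by linarith
  have "norm (Psc n t y \<zeta>) \<le> c * pi * sqrt 6 * exp (C - 2 * \<sigma> * D / q)"
    using norm_Psc_le_saddle[OF assms(2-4), where n = n, folded \<sigma>_def q_def D_def] assms(5)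
    by (simp add: C_def c_def q_def)
  also have "\<dots> \<le> 1 * pi * sqrt 6 * exp (C + 2 * \<sigma> - 2 * c * \<sigma> * (y + \<zeta>))"
    using \<open>c \<le> 1\<close> \<open>C - 2 * \<sigma> * D / q \<le> C + 2 * \<sigma> - 2 * c * \<sigma> * (y + \<zeta>)\<close>
    by (intro mult_mono) auto
  also have "exp (C + 2 * \<sigma> - 2 * c * \<sigma> * (y + \<zeta>)) = exp (C + 2 * \<sigma>) * exp (- (2 * c * \<sigma>) * (y + \<zeta>))"
    by (simp add: mult_exp_exp algebra_simps)
  finally show ?thesis
    by (simp add: C_def c_def mult.assoc)
qed

theorem proposition5p3:
  fixes L M \<zeta>0 :: real
  assumes "L < M"
  shows "\<exists>c > 0. \<exists>C :: real. \<exists>N :: nat. \<forall>n \<ge> N. \<forall>t \<in> {L..M}. \<forall>y \<ge> 0. \<forall>\<zeta> \<ge> \<zeta>0.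
           norm (Psc n t y \<zeta>) \<le> C * exp (- c * (y + \<zeta>))"
proof -
  define T where "T = \<bar>L\<bar> + \<bar>M\<bar>"
  define Z where "Z = \<bar>\<zeta>0\<bar>"
  define \<sigma> where "\<sigma> = 2 * T + 2"
  define C where "C = pi * sqrt 6 * exp (3 * ln (sqrt 2 + 1) + 4 * \<sigma>^2 * (\<sigma> + 3 * (T + 1)) + \<sigma> * (Z + 1) + 2 * \<sigma>)"
  define N where "N = nat \<lceil>(13 * \<sigma> + 3 * Z + 5)^3\<rceil>"
  have "0 < 2 * 2 powr (-5/6) * \<sigma>"
    by (simp add: \<sigma>_def T_def add_pos_nonneg)
  moreover have "norm (Psc n t y \<zeta>) \<le> C * exp (- (2 * 2 powr (-5/6) * \<sigma>) * (y + \<zeta>))"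
    if "n \<ge> N" "t \<in> {L..M}" "y \<ge> 0" "\<zeta> \<ge> \<zeta>0" for n t y \<zeta>
  proof -
    have "(13 * \<sigma> + 3 * Z + 5)^3 \<le> n"
      using that(1) by (simp add: N_def nat_le_iff ceiling_le_iff)
    then have "13 * \<sigma> + 3 * Z + 5 \<le> n powr (1/3)"
      by (rule le_powr_one_third_if_cube_le[rotated]) (simp add: \<sigma>_def T_def Z_def)
    moreover have "\<bar>t\<bar> \<le> T" "Z \<ge> 0" "y + \<zeta> \<ge> - Z"
      using that by (auto simp: T_def Z_def)
    ultimately show ?thesis
      using norm_Psc_le[of t T Z y \<zeta> n] by (simp add: C_def \<sigma>_def)
  qed
  ultimately show ?thesis
    by blast
qed

end
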